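(* Fix $\varepsilon>0$, $\delta>0$ and a positive integer $t$. For a database $D$ (a finite multiset of points in $\mathbb{R}^d$), define $M(D)$ to be the largest $k\in\{0,1,\dots,t-1\}$ for which there exists a positive integer $g$ with $$\frac{V_{t-k-1,D}}{V_{t+k+g+1,D}}\cdot e^{-\varepsilon g/2}\le\delta,$$ where this inequality is understood to hold only when $V_{t-k-1,D}<\infty$ and $V_{t+k+g+1,D}>0$; if no such $k$ exists, $M(D)=-1$. Then: (1) $M$ has sensitivity 1: for all neighboring databases $D\sim D'$, $|M(D)-M(D')|\le 1$. (2) Assume that for every database $z$ under consideration the set $\{y:\tilde T_z(y)\ge t\}$ has positive Lebesgue measure (so that $A_t(z)$ below is well defined). Then for every database $z\in\mathrm{Unsafe}(\varepsilon,4e^{\varepsilon}\delta,t)$ we have $d_H(D,z)>M(D)$.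
   Context: Databases are finite multisets of points in $\mathbb{R}^d$; $D\sim D'$ (neighbors) means one is obtained from the other by adding or removing a single point. $d_H(D,z)$ is the minimum number of single-point additions/removals needed to transform $D$ into $z$. For $y\in\mathbb{R}^d$ and $j\in[d]$, $T_{D,j}(y)=\min\big(|\{x\in D: x_j\le y_j\}|,|\{x\in D: x_j\ge y_j\}|\big)$ (with multiplicity), and the approximate Tukey depth is $\tilde T_D(y)=\min_{j\in[d]}T_{D,j}(y)$. For an integer $p$, $V_{p,D}$ is the Lebesgue measure of $\{y:\tilde T_D(y)\ge p\}$ (so $V_{p,D}=+\infty$ for $p\le 0$). Two distributions $P,Q$ on $\mathbb{R}^d$ are $(\varepsilon,\delta)$-indistinguishable if for every measurable $W$, $P(W)\le e^{\varepsilon}Q(W)+\delta$ and $Q(W)\le e^{\varepsilon}P(W)+\delta$. For a database $z$, $A_t(z)$ is the restricted exponential mechanism: the distribution on $\mathbb{R}^d$ with density proportional to $\exp(\varepsilon\,\tilde T_z(y)/2)\cdot\mathbf{1}[\tilde T_z(y)\ge t]$. A database $z$ is $(\varepsilon,\delta,t)$-safe if $A_t(z)$ and $A_t(z')$ are $(\varepsilon,\delta)$-indistinguishable for every neighbor $z'\sim z$; $\mathrm{Unsafe}(\varepsilon,\delta,t)$ is the set of databases that are not $(\varepsilon,\delta,t)$-safe. *)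

theory Defs
  imports "HOL-Analysis.Analysis" "HOL-Library.Multiset"
begin

type_synonym 'n db = "(real ^ 'n) multiset"

definition nbr :: "'n::finite db \<Rightarrow> 'n db \<Rightarrow> bool" where
  "nbr D D' \<longleftrightarrow> (\<exists>x. D' = add_mset x D) \<or> (\<exists>x. D = add_mset x D')"

definition dH :: "'n::finite db \<Rightarrow> 'n db \<Rightarrow> nat" where
  "dH D z = (LEAST n. (nbr ^^ n) D z)"

definition Tj :: "'n::finite db \<Rightarrow> 'n \<Rightarrow> real ^ 'n \<Rightarrow> nat" where
  "Tj D j y = min (size (filter_mset (\<lambda>x. x $ j \<le> y $ j) D))
                  (size (filter_mset (\<lambda>x. x $ j \<ge> y $ j) D))"

definition tukey :: "'n::finite db \<Rightarrow> real ^ 'n \<Rightarrow> nat" where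
  "tukey D y = Min (range (\<lambda>j. Tj D j y))"

text \<open>V_{p,D}: Lebesgue measure of the depth-p region (= \<infinity> for p \<le> 0).\<close>
definition Vol :: "int \<Rightarrow> 'n::finite db \<Rightarrow> ennreal" where
  "Vol p D = emeasure lebesgue {y. p \<le> int (tukey D y)}"

definition Mcond :: "real \<Rightarrow> real \<Rightarrow> nat \<Rightarrow> 'n::finite db \<Rightarrow> nat \<Rightarrow> bool" where
  "Mcond eps delta t D k \<longleftrightarrow> (\<exists>g::nat. g > 0 \<and>
      Vol (int t - int k - 1) D < \<infinity> \<and>
      Vol (int t + int k + int g + 1) D > 0 \<and>
      enn2real (Vol (int t - int k - 1) D) / enn2real (Vol (int t + int k + int g + 1) D)
        * exp (- eps * real g / 2) \<le> delta)"

definition Mfun :: "real \<Rightarrow> real \<Rightarrow> nat \<Rightarrow> 'n::finite db \<Rightarrow> int" where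
  "Mfun eps delta t D =
     (if \<exists>k<t. Mcond eps delta t D k then int (GREATEST k. k < t \<and> Mcond eps delta t D k) else -1)"

definition mechf :: "real \<Rightarrow> nat \<Rightarrow> 'n::finite db \<Rightarrow> real ^ 'n \<Rightarrow> ennreal" where
  "mechf eps t z y = ennreal (exp (eps * real (tukey z y) / 2)) * indicator {y. t \<le> tukey z y} y"

definition mechA :: "real \<Rightarrow> nat \<Rightarrow> 'n::finite db \<Rightarrow> (real ^ 'n) measure" where
  "mechA eps t z = density lebesgue
     (\<lambda>y. mechf eps t z y / (\<integral>\<^sup>+ u. mechf eps t z u \<partial>lebesgue))"

definition indist :: "real \<Rightarrow> real \<Rightarrow> 'a measure \<Rightarrow> 'a measure \<Rightarrow> bool" where
  "indist eps delta P Q \<longleftrightarrow> sets P = sets Q \<and> (\<forall>W \<in> sets P.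
      measure P W \<le> exp eps * measure Q W + delta \<and>
      measure Q W \<le> exp eps * measure P W + delta)"

definition safe :: "real \<Rightarrow> real \<Rightarrow> nat \<Rightarrow> 'n::finite db \<Rightarrow> bool" where
  "safe eps delta t z \<longleftrightarrow> (\<forall>z'. nbr z z' \<longrightarrow> indist eps delta (mechA eps t z) (mechA eps t z'))"

definition Unsafe :: "real \<Rightarrow> real \<Rightarrow> nat \<Rightarrow> 'n::finite db set" where
  "Unsafe eps delta t = {z. \<not> safe eps delta t z}"

end

theory Submission
  imports Defs
begin

text \<open>Adding or removing one point changes every approximate Tukey depth by at most one, so two
  databases at distance \<open>n\<close> have pointwise depths within \<open>n\<close> of each other. Shifting the
  depth levels by one therefore turns a witness \<open>g\<close> for level \<open>k + 1\<close> of \<open>D\<close> into a witness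
  for level \<open>k\<close> of a neighbour, which gives sensitivity 1.

  For safety, let \<open>k = M(D) \<ge> d_H(D, z)\<close>; then \<open>z\<close> and all its neighbours have depths within
  \<open>k + 1\<close> of \<open>D\<close>. For neighbours \<open>z1, z2\<close> the unnormalised densities satisfy
  \<open>f1 \<le> e^{\<epsilon>/2} f2 + e^{\<epsilon>t/2} 1_E\<close>, where \<open>E\<close> is the set on which \<open>z1\<close> has depth
  \<open>t\<close> and \<open>z2\<close> depth below \<open>t\<close>; normalising yields \<open>A(z1)(W) \<le> e^\<epsilon> A(z2)(W)\<close> plus an error of
  order \<open>|E| / Z1\<close>. Now \<open>|E| \<le> V_{t-k-1,D}\<close>, while the normaliser \<open>Z1\<close> is at least
  \<open>e^{\<epsilon>(t+g)/2} V_{t+k+g+1,D}\<close>, so the defining inequality of \<open>M\<close> bounds the error by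
  \<open>(e^{\<epsilon>/2} + 1) \<delta>\<close>.\<close>

lemma tukey_ge_iff: "m \<le> tukey D y \<longleftrightarrow> (\<forall>j. m \<le> Tj D j y)"
  unfolding tukey_def by (subst Min_ge_iff) auto

lemma tukey_le_Tj: "tukey D y \<le> Tj D j y"
  unfolding tukey_def by (rule Min_le) auto

lemma tukey_le_size: "tukey D y \<le> size D"
  using tukey_le_Tj[of D y] size_filter_mset_lesseq[of _ D] unfolding Tj_def
  by (meson min.coboundedI1 order_trans)

lemma tukey_add_mset:
  "tukey D y \<le> tukey (add_mset x D) y" "tukey (add_mset x D) y \<le> Suc (tukey D y)"
proof -
  have "tukey D y \<le> Tj (add_mset x D) j y" for j
    using tukey_le_Tj[of D y j] by (auto simp: Tj_def)
  then show "tukey D y \<le> tukey (add_mset x D) y"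
    by (simp add: tukey_ge_iff)
  have "tukey D y \<in> range (\<lambda>j. Tj D j y)"
    unfolding tukey_def by (rule Min_in) auto
  then obtain j where "tukey D y = Tj D j y" by blast
  moreover have "Tj (add_mset x D) j y \<le> Suc (Tj D j y)"
    by (auto simp: Tj_def)
  ultimately show "tukey (add_mset x D) y \<le> Suc (tukey D y)"
    using tukey_le_Tj[of "add_mset x D" y j] by linarith
qed

definition depth_close :: "nat \<Rightarrow> 'n::finite db \<Rightarrow> 'n db \<Rightarrow> bool" where
  "depth_close n A B \<longleftrightarrow> (\<forall>y. tukey A y \<le> tukey B y + n \<and> tukey B y \<le> tukey A y + n)"

lemma depth_close_sym: "depth_close n A B \<Longrightarrow> depth_close n B A"
  unfolding depth_close_def by auto

lemma depth_close_trans: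
  assumes "depth_close m A B" "depth_close n B C"
  shows "depth_close (m + n) A C"
  unfolding depth_close_def
proof
  fix y
  show "tukey A y \<le> tukey C y + (m + n) \<and> tukey C y \<le> tukey A y + (m + n)"
    using assms[unfolded depth_close_def, THEN spec[of _ y]] by linarith
qed

lemma depth_close_mono: "depth_close m A B \<Longrightarrow> m \<le> n \<Longrightarrow> depth_close n A B"
  unfolding depth_close_def by (meson add_left_mono le_trans)

lemma nbr_depth_close:
  assumes "nbr A B"
  shows "depth_close 1 A B"
proof -
  from assms consider x where "B = add_mset x A" | x where "A = add_mset x B"
    unfolding nbr_def by blast
  then show ?thesis
  proof cases
    case 1
    then show ?thesis using tukey_add_mset[where D = A] by (auto simp: depth_close_def intro: le_SucI)
  next
    case 2
    then show ?thesis using tukey_add_mset[where D = B] by (auto simp: depth_close_def intro: le_SucI)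
  qed
qed

lemma relpowp_nbr_depth_close: "(nbr ^^ n) A B \<Longrightarrow> depth_close n A B"
proof (induction n arbitrary: B)
  case 0
  then show ?case by (auto elim: relpowp_0_E simp: depth_close_def)
next
  case (Suc n)
  from Suc.prems obtain C where "(nbr ^^ n) A C" "nbr C B" by (rule relpowp_Suc_E)
  then show ?case using depth_close_trans[OF Suc.IH nbr_depth_close] by simp
qed

lemma relpowp_nbr_empty: "(nbr ^^ size D) D {#}" "(nbr ^^ size D) {#} D"
proof (induction D)
  case (add x D)
  have "nbr (add_mset x D) D" "nbr D (add_mset x D)" by (auto simp: nbr_def)
  with add show "(nbr ^^ size (add_mset x D)) (add_mset x D) {#}"
      "(nbr ^^ size (add_mset x D)) {#} (add_mset x D)"
    by (simp_all add: relpowp_Suc_I2 del: relpowp.simps) (metis relpowp_Suc_I)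
qed simp_all

lemma depth_close_dH: "depth_close (dH D z) D z"
proof -
  have "(nbr ^^ (size D + size z)) D z"
    unfolding relpowp_add using relpowp_nbr_empty by blast
  then have "(nbr ^^ dH D z) D z"
    unfolding dH_def by (rule LeastI)
  then show ?thesis by (rule relpowp_nbr_depth_close)
qed

lemma measurable_size_filter_mset[measurable]:
  assumes [measurable]: "\<And>x. Measurable.pred M (P x)"
  shows "(\<lambda>y. real (size (filter_mset (\<lambda>x. P x y) D))) \<in> borel_measurable M"
proof (induction D)
  case (add x D)
  have "(\<lambda>y. real (size (filter_mset (\<lambda>x. P x y) (add_mset x D)))) =
      (\<lambda>y. real (size (filter_mset (\<lambda>x. P x y) D)) + (if P x y then 1 else 0))"
    by auto
  with add show ?case by simp
qed simp

lemma sets_tukey_ge: "{y. m \<le> tukey D y} \<in> sets borel"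
proof -
  have "{y. m \<le> tukey D y} = (\<Inter>j. {y. real m \<le> real (size (filter_mset (\<lambda>x. x $ j \<le> y $ j) D))
      \<and> real m \<le> real (size (filter_mset (\<lambda>x. y $ j \<le> x $ j) D))})"
    by (auto simp: tukey_ge_iff Tj_def)
  also have "\<dots> \<in> sets borel"
    by (intro sets.finite_INT allI) measurable
  finally show ?thesis .
qed

lemma tukey_measurable_borel: "tukey D \<in> borel \<rightarrow>\<^sub>M count_space UNIV"
proof (subst measurable_count_space_eq2_countable, intro conjI ballI)
  fix a
  have "tukey D -` {a} \<inter> space borel = {y. a \<le> tukey D y} - {y. Suc a \<le> tukey D y}"
    by auto
  then show "tukey D -` {a} \<inter> space borel \<in> sets borel"
    using sets_tukey_ge by (metis sets.Diff)
qed auto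

lemma tukey_measurable: "tukey D \<in> lebesgue \<rightarrow>\<^sub>M count_space UNIV"
  using tukey_measurable_borel by (intro measurable_completion) simp

lemma sets_tukey: "{y. P (tukey D y)} \<in> sets lebesgue"
  using measurable_sets[OF tukey_measurable, of "{n. P n}" D] by (simp add: vimage_def)


lemma Vol_mono: "q \<le> p \<Longrightarrow> Vol p D \<le> Vol q D"
  unfolding Vol_def by (rule emeasure_mono) (auto intro: sets_tukey)

lemma Vol_depth_close:
  assumes "depth_close n A B"
  shows "Vol p A \<le> Vol (p - int n) B"
  unfolding Vol_def
proof (rule emeasure_mono[OF subsetI sets_tukey])
  fix y
  assume "y \<in> {y. p \<le> int (tukey A y)}"
  with assms show "y \<in> {y. p - int n \<le> int (tukey B y)}"
    unfolding depth_close_def by (auto dest: spec[of _ y])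
qed

lemma enn2real_divide_mono:
  fixes a a' b b' :: ennreal
  assumes "a' \<le> a" "a < \<infinity>" "b \<le> b'" "0 < b"
  shows "enn2real a' / enn2real b' \<le> enn2real a / enn2real b"
proof (cases "b' = \<infinity>")
  case False
  then have "0 < enn2real b" "enn2real b \<le> enn2real b'"
    using assms by (auto simp: enn2real_positive_iff top.not_eq_extremum intro: enn2real_mono)
  moreover have "enn2real a' \<le> enn2real a"
    using assms by (intro enn2real_mono) auto
  ultimately show ?thesis by (intro frac_le) auto
qed simp

lemma Mcond_depth_close:
  assumes "depth_close 1 D D'" "Mcond eps delta t D (Suc k)"
  shows "Mcond eps delta t D' k"
proof -
  from assms(2) obtain g :: nat where "g > 0"
    and fin: "Vol (int t - int (Suc k) - 1) D < \<infinity>"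
    and pos: "Vol (int t + int (Suc k) + int g + 1) D > 0"
    and ratio: "enn2real (Vol (int t - int (Suc k) - 1) D) / enn2real (Vol (int t + int (Suc k) + int g + 1) D)
        * exp (- eps * real g / 2) \<le> delta"
    unfolding Mcond_def by blast
  have low: "Vol (int t - int k - 1) D' \<le> Vol (int t - int (Suc k) - 1) D"
    using Vol_depth_close[OF depth_close_sym[OF assms(1)], of "int t - int k - 1"] by simp
  have high: "Vol (int t + int (Suc k) + int g + 1) D \<le> Vol (int t + int k + int g + 1) D'"
    using Vol_depth_close[OF assms(1), of "int t + int (Suc k) + int g + 1"]
    by (simp add: algebra_simps)
  have "enn2real (Vol (int t - int k - 1) D') / enn2real (Vol (int t + int k + int g + 1) D')
      \<le> enn2real (Vol (int t - int (Suc k) - 1) D) / enn2real (Vol (int t + int (Suc k) + int g + 1) D)"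
    using low fin high pos by (rule enn2real_divide_mono)
  then have "enn2real (Vol (int t - int k - 1) D') / enn2real (Vol (int t + int k + int g + 1) D')
      * exp (- eps * real g / 2) \<le> enn2real (Vol (int t - int (Suc k) - 1) D)
        / enn2real (Vol (int t + int (Suc k) + int g + 1) D) * exp (- eps * real g / 2)"
    by (rule mult_right_mono) simp
  also note ratio
  finally have "enn2real (Vol (int t - int k - 1) D') / enn2real (Vol (int t + int k + int g + 1) D')
      * exp (- eps * real g / 2) \<le> delta" .
  moreover have "Vol (int t - int k - 1) D' < \<infinity>"
    using low fin by (rule le_less_trans)
  moreover have "Vol (int t + int k + int g + 1) D' > 0"
    using pos high by (rule less_le_trans)
  ultimately show ?thesis
    unfolding Mcond_def using \<open>g > 0\<close> by blast
qed

lemma Mfun_ge_minus_one: "-1 \<le> Mfun eps delta t D"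
  unfolding Mfun_def by simp

lemma le_Mfun:
  assumes "Mcond eps delta t D k" "k < t"
  shows "int k \<le> Mfun eps delta t D"
proof -
  have "k \<le> (GREATEST k. k < t \<and> Mcond eps delta t D k)"
    using assms by (intro Greatest_le_nat[where b = t]) auto
  moreover have "\<exists>k<t. Mcond eps delta t D k"
    using assms by blast
  ultimately show ?thesis
    by (simp add: Mfun_def)
qed

lemma Mcond_Mfun:
  assumes "0 \<le> Mfun eps delta t D"
  shows "Mcond eps delta t D (nat (Mfun eps delta t D))" "nat (Mfun eps delta t D) < t"
proof -
  have ex: "\<exists>k<t. Mcond eps delta t D k"
    using assms by (rule contrapos_pp) (simp add: Mfun_def)
  then obtain k where "k < t \<and> Mcond eps delta t D k"
    by blast
  then have "(GREATEST k. k < t \<and> Mcond eps delta t D k) < t \<and>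
      Mcond eps delta t D (GREATEST k. k < t \<and> Mcond eps delta t D k)"
    by (rule GreatestI_nat[where b = t]) simp
  with ex show "Mcond eps delta t D (nat (Mfun eps delta t D))" "nat (Mfun eps delta t D) < t"
    unfolding Mfun_def by simp_all
qed

lemma Mfun_depth_close:
  assumes "depth_close 1 D D'"
  shows "Mfun eps delta t D - 1 \<le> Mfun eps delta t D'"
proof (cases "1 \<le> Mfun eps delta t D")
  case True
  define k where "k = nat (Mfun eps delta t D) - 1"
  have k: "Mfun eps delta t D = int (Suc k)"
    using True unfolding k_def by simp
  have "0 \<le> Mfun eps delta t D"
    using True by simp
  from Mcond_Mfun[OF this] have "Mcond eps delta t D (Suc k)" "Suc k < t"
    unfolding k nat_int .
  then have "int k \<le> Mfun eps delta t D'"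
    by (intro le_Mfun Mcond_depth_close[OF assms]) simp_all
  with k show ?thesis by simp
qed (use Mfun_ge_minus_one[of eps delta t D'] in simp)

lemma Mfun_nbr:
  assumes "nbr D D'"
  shows "\<bar>Mfun eps delta t D - Mfun eps delta t D'\<bar> \<le> 1"
  using Mfun_depth_close[OF nbr_depth_close[OF assms], of eps delta t]
    Mfun_depth_close[OF depth_close_sym[OF nbr_depth_close[OF assms]], of eps delta t]
  by linarith

lemma measure_normalized_density:
  fixes f :: "'a \<Rightarrow> ennreal"
  assumes [measurable]: "f \<in> borel_measurable M" "W \<in> sets M"
    and "(\<integral>\<^sup>+x. f x \<partial>M) < \<infinity>" "0 < (\<integral>\<^sup>+x. f x \<partial>M)"
  shows "measure (density M (\<lambda>x. f x / (\<integral>\<^sup>+u. f u \<partial>M))) W =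
    enn2real (\<integral>\<^sup>+x. f x * indicator W x \<partial>M) / enn2real (\<integral>\<^sup>+x. f x \<partial>M)"
proof -
  define Z where "Z = (\<integral>\<^sup>+x. f x \<partial>M)"
  define I where "I = (\<integral>\<^sup>+x. f x * indicator W x \<partial>M)"
  have "I \<le> Z"
    unfolding I_def Z_def by (intro nn_integral_mono) (simp add: indicator_def)
  then have fin: "I < \<infinity>" "Z < \<infinity>" and pos: "0 < enn2real Z"
    using assms by (auto simp: Z_def enn2real_positive_iff)
  have "emeasure (density M (\<lambda>x. f x / Z)) W = (\<integral>\<^sup>+x. f x * indicator W x * inverse Z \<partial>M)"
    by (simp add: emeasure_density divide_ennreal_def ac_simps)
  also have "\<dots> = I / Z"
    unfolding I_def by (simp add: nn_integral_multc divide_ennreal_def)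
  also have "\<dots> = ennreal (enn2real I) / ennreal (enn2real Z)"
    using fin by simp
  also have "\<dots> = ennreal (enn2real I / enn2real Z)"
    using pos by (simp add: divide_ennreal)
  finally show ?thesis
    unfolding measure_def Z_def I_def by simp
qed

lemma enn2real_le_cmult_add:
  assumes "X \<le> ennreal c * Y + V" "Y < \<infinity>" "V < \<infinity>" "0 \<le> c"
  shows "enn2real X \<le> c * enn2real Y + enn2real V"
proof -
  have fin: "ennreal c * Y + V < top"
    using assms by (simp add: ennreal_mult_less_top)
  with assms(1) have "enn2real X \<le> enn2real (ennreal c * Y + V)"
    by (rule enn2real_mono)
  also have "\<dots> = c * enn2real Y + enn2real V"
    using assms fin by (simp add: enn2real_plus ennreal_mult_less_top enn2real_mult)
  finally show ?thesis .
qed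

lemma divide_le_of_affine_bounds:
  fixes i1 i2 z1 z2 e b1 b2 :: real
  assumes "i1 \<le> e * i2 + b1" "z2 \<le> e * z1 + b2"
    and "0 < z1" "0 < z2" "0 \<le> i2" "i2 \<le> z2" "0 \<le> b2" "0 \<le> e"
  shows "i1 / z1 \<le> e\<^sup>2 * (i2 / z2) + (e * b2 + b1) / z1"
proof -
  define p where "p = i2 / z2"
  have p: "0 \<le> p" "p \<le> 1" "i2 = p * z2"
    using assms by (simp_all add: p_def)
  have "i1 \<le> e * (p * z2) + b1"
    using assms(1) p(3) by simp
  also have "\<dots> \<le> e * (p * (e * z1 + b2)) + b1"
    using assms p by (intro add_right_mono mult_left_mono) auto
  also have "\<dots> = e\<^sup>2 * p * z1 + e * (p * b2) + b1"
    by (simp add: algebra_simps power2_eq_square)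
  also have "\<dots> \<le> e\<^sup>2 * p * z1 + e * b2 + b1"
    using assms p by (simp add: mult_left_mono mult_left_le_one_le)
  finally show ?thesis
    using assms(3) unfolding p_def[symmetric] by (simp add: field_simps)
qed

lemma measure_normalized_density_le:
  fixes f1 f2 h1 h2 :: "'a \<Rightarrow> ennreal" and e :: real
  assumes [measurable]: "f1 \<in> borel_measurable M" "f2 \<in> borel_measurable M"
      "h1 \<in> borel_measurable M" "h2 \<in> borel_measurable M" "W \<in> sets M"
    and "0 \<le> e"
    and f1_le: "\<And>x. f1 x \<le> ennreal e * f2 x + h1 x"
    and f2_le: "\<And>x. f2 x \<le> ennreal e * f1 x + h2 x"
    and Z1: "0 < (\<integral>\<^sup>+x. f1 x \<partial>M)" "(\<integral>\<^sup>+x. f1 x \<partial>M) < \<infinity>"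
    and Z2: "0 < (\<integral>\<^sup>+x. f2 x \<partial>M)" "(\<integral>\<^sup>+x. f2 x \<partial>M) < \<infinity>"
    and H: "(\<integral>\<^sup>+x. h1 x \<partial>M) < \<infinity>" "(\<integral>\<^sup>+x. h2 x \<partial>M) < \<infinity>"
  shows "measure (density M (\<lambda>x. f1 x / (\<integral>\<^sup>+u. f1 u \<partial>M))) W
    \<le> e\<^sup>2 * measure (density M (\<lambda>x. f2 x / (\<integral>\<^sup>+u. f2 u \<partial>M))) W
      + (e * enn2real (\<integral>\<^sup>+x. h2 x \<partial>M) + enn2real (\<integral>\<^sup>+x. h1 x \<partial>M)) / enn2real (\<integral>\<^sup>+x. f1 x \<partial>M)"
proof -
  define z1 z2 where "z1 = enn2real (\<integral>\<^sup>+x. f1 x \<partial>M)" and "z2 = enn2real (\<integral>\<^sup>+x. f2 x \<partial>M)"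
  define i1 i2 where "i1 = enn2real (\<integral>\<^sup>+x. f1 x * indicator W x \<partial>M)"
    and "i2 = enn2real (\<integral>\<^sup>+x. f2 x * indicator W x \<partial>M)"
  define \<eta>1 \<eta>2 where "\<eta>1 = enn2real (\<integral>\<^sup>+x. h1 x \<partial>M)" and "\<eta>2 = enn2real (\<integral>\<^sup>+x. h2 x \<partial>M)"
  have I2: "(\<integral>\<^sup>+x. f2 x * indicator W x \<partial>M) \<le> (\<integral>\<^sup>+x. f2 x \<partial>M)"
    by (intro nn_integral_mono) (simp add: indicator_def)
  have "(\<integral>\<^sup>+x. f1 x * indicator W x \<partial>M)
      \<le> (\<integral>\<^sup>+x. ennreal e * (f2 x * indicator W x) + h1 x \<partial>M)"
    using f1_le by (intro nn_integral_mono) (simp add: indicator_def add_increasing)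
  then have "i1 \<le> e * i2 + \<eta>1"
    unfolding i1_def i2_def \<eta>1_def using I2 Z2 H \<open>0 \<le> e\<close>
    by (intro enn2real_le_cmult_add) (auto simp: nn_integral_add nn_integral_cmult)
  moreover have "(\<integral>\<^sup>+x. f2 x \<partial>M) \<le> (\<integral>\<^sup>+x. ennreal e * f1 x + h2 x \<partial>M)"
    using f2_le by (intro nn_integral_mono) simp
  then have "z2 \<le> e * z1 + \<eta>2"
    unfolding z1_def z2_def \<eta>2_def using Z1 H \<open>0 \<le> e\<close>
    by (intro enn2real_le_cmult_add) (auto simp: nn_integral_add nn_integral_cmult)
  moreover have "0 < z1" "0 < z2" "0 \<le> i2" "i2 \<le> z2" "0 \<le> \<eta>2"
    unfolding z1_def z2_def i2_def \<eta>2_def using Z1 Z2 I2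
    by (auto simp: enn2real_positive_iff intro: enn2real_mono)
  ultimately have "i1 / z1 \<le> e\<^sup>2 * (i2 / z2) + (e * \<eta>2 + \<eta>1) / z1"
    using \<open>0 \<le> e\<close> by (rule divide_le_of_affine_bounds)
  then show ?thesis
    using measure_normalized_density[of f1 M W] measure_normalized_density[of f2 M W] Z1 Z2
    unfolding z1_def z2_def i1_def i2_def \<eta>1_def \<eta>2_def by simp
qed

lemma mechf_eq: "mechf eps t z y = (if t \<le> tukey z y then ennreal (exp (eps * real (tukey z y) / 2)) else 0)"
  by (simp add: mechf_def indicator_def)

lemma mechf_measurable[measurable]: "mechf eps t z \<in> borel_measurable lebesgue"
proof -
  have "mechf eps t z = (\<lambda>n. if t \<le> n then ennreal (exp (eps * real n / 2)) else 0) \<circ> tukey z"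
    by (simp add: fun_eq_iff mechf_eq)
  also have "\<dots> \<in> borel_measurable lebesgue"
    by (rule measurable_comp[OF tukey_measurable]) simp
  finally show ?thesis .
qed

lemma mechf_le_depth_close:
  assumes "depth_close 1 z1 z2" "0 \<le> eps"
  shows "mechf eps t z1 y \<le> ennreal (exp (eps / 2)) * mechf eps t z2 y
    + ennreal (exp (eps * real t / 2)) * indicator {y. t \<le> tukey z1 y \<and> tukey z2 y < t} y"
proof -
  have close: "tukey z1 y \<le> Suc (tukey z2 y)"
    using assms(1) by (simp add: depth_close_def)
  consider "tukey z1 y < t" | "t \<le> tukey z2 y" | "tukey z2 y < t" "tukey z1 y = t"
    using close by linarith
  then show ?thesis
  proof cases
    case 2
    have "exp (eps * real (tukey z1 y) / 2) \<le> exp (eps * real (Suc (tukey z2 y)) / 2)"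
      using close assms(2) by (simp add: mult_left_mono)
    also have "\<dots> = exp (eps / 2) * exp (eps * real (tukey z2 y) / 2)"
      by (simp add: exp_add[symmetric] algebra_simps add_divide_distrib)
    finally show ?thesis
      using 2 close by (simp add: mechf_eq ennreal_mult[symmetric] add_increasing2)
  qed (simp_all add: mechf_eq)
qed

lemma nn_integral_mechf_finite:
  assumes "0 \<le> eps" "Vol (int t) z < \<infinity>"
  shows "(\<integral>\<^sup>+y. mechf eps t z y \<partial>lebesgue) < \<infinity>"
proof -
  have "(\<integral>\<^sup>+y. mechf eps t z y \<partial>lebesgue)
      \<le> (\<integral>\<^sup>+y. ennreal (exp (eps * real (size z) / 2)) * indicator {y. int t \<le> int (tukey z y)} y \<partial>lebesgue)"
    using tukey_le_size[of z] assms(1)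
    by (intro nn_integral_mono) (simp add: mechf_eq indicator_def mult_left_mono)
  also have "\<dots> = ennreal (exp (eps * real (size z) / 2)) * Vol (int t) z"
    unfolding Vol_def by (intro nn_integral_cmult_indicator sets_tukey)
  also have "\<dots> < \<infinity>"
    using assms(2) by (simp add: ennreal_mult_less_top)
  finally show ?thesis .
qed

lemma nn_integral_mechf_ge:
  assumes "depth_close n D z" "0 \<le> eps"
  shows "ennreal (exp (eps * real (t + g) / 2)) * Vol (int (t + g + n)) D
    \<le> (\<integral>\<^sup>+y. mechf eps t z y \<partial>lebesgue)"
proof -
  have "ennreal (exp (eps * real (t + g) / 2)) * Vol (int (t + g + n)) D = (\<integral>\<^sup>+y.
      ennreal (exp (eps * real (t + g) / 2)) * indicator {y. int (t + g + n) \<le> int (tukey D y)} y \<partial>lebesgue)"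
    unfolding Vol_def by (intro nn_integral_cmult_indicator[symmetric] sets_tukey)
  also have "\<dots> \<le> (\<integral>\<^sup>+y. mechf eps t z y \<partial>lebesgue)"
  proof (intro nn_integral_mono)
    fix y
    have "tukey D y \<le> tukey z y + n"
      using assms(1) by (simp add: depth_close_def)
    then show "ennreal (exp (eps * real (t + g) / 2)) * indicator {y. int (t + g + n) \<le> int (tukey D y)} y
        \<le> mechf eps t z y"
      using assms(2) by (auto simp: mechf_eq indicator_def mult_left_mono)
  qed
  finally show ?thesis .
qed

lemma sets_depth_boundary[measurable]: "{y. t \<le> tukey z1 y \<and> tukey z2 y < t} \<in> sets lebesgue"
  using sets.Int[OF sets_tukey[of "\<lambda>n. t \<le> n" z1] sets_tukey[of "\<lambda>n. n < t" z2]]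
  by (simp add: Collect_conj_eq)

lemma emeasure_depth_boundary_le: "emeasure lebesgue {y. t \<le> tukey z1 y \<and> tukey z2 y < t} \<le> Vol (int t) z1"
  unfolding Vol_def by (intro emeasure_mono sets_tukey) auto

lemma mechA_measure_le_boundary:
  assumes eps: "0 \<le> eps" and z12: "depth_close 1 z1 z2" and W: "W \<in> sets lebesgue"
    and fin: "Vol (int t) z1 < \<infinity>" "Vol (int t) z2 < \<infinity>"
    and pos: "0 < (\<integral>\<^sup>+y. mechf eps t z1 y \<partial>lebesgue)" "0 < (\<integral>\<^sup>+y. mechf eps t z2 y \<partial>lebesgue)"
  shows "measure (mechA eps t z1) W \<le> exp eps * measure (mechA eps t z2) W
    + exp (eps * real t / 2) * (exp (eps / 2) * enn2real (emeasure lebesgue {y. t \<le> tukey z2 y \<and> tukey z1 y < t})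
        + enn2real (emeasure lebesgue {y. t \<le> tukey z1 y \<and> tukey z2 y < t}))
      / enn2real (\<integral>\<^sup>+y. mechf eps t z1 y \<partial>lebesgue)"
proof -
  define e c where "e = exp (eps / 2)" and "c = exp (eps * real t / 2)"
  define E where "E z z' = {y. t \<le> tukey z y \<and> tukey z' y < t}" for z z' :: "'a db"
  have h_int: "(\<integral>\<^sup>+y. ennreal c * indicator (E z z') y \<partial>lebesgue) = ennreal c * emeasure lebesgue (E z z')"
    for z z'
    unfolding E_def by (simp add: nn_integral_cmult_indicator)
  have [measurable]: "E z z' \<in> sets lebesgue" for z z'
    unfolding E_def by (rule sets_depth_boundary)
  have E_fin: "emeasure lebesgue (E z1 z2) < \<infinity>" "emeasure lebesgue (E z2 z1) < \<infinity>"
    using emeasure_depth_boundary_le fin unfolding E_def by (blast intro: le_less_trans)+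
  have "measure (mechA eps t z1) W \<le> e\<^sup>2 * measure (mechA eps t z2) W
      + (e * enn2real (\<integral>\<^sup>+y. ennreal c * indicator (E z2 z1) y \<partial>lebesgue)
         + enn2real (\<integral>\<^sup>+y. ennreal c * indicator (E z1 z2) y \<partial>lebesgue))
        / enn2real (\<integral>\<^sup>+y. mechf eps t z1 y \<partial>lebesgue)"
    unfolding mechA_def
  proof (rule measure_normalized_density_le)
    show "mechf eps t z1 y \<le> ennreal e * mechf eps t z2 y + ennreal c * indicator (E z1 z2) y"
      and "mechf eps t z2 y \<le> ennreal e * mechf eps t z1 y + ennreal c * indicator (E z2 z1) y" for y
      unfolding e_def c_def E_def using mechf_le_depth_close[OF _ eps] z12 depth_close_sym by blast+
  qed (use W pos nn_integral_mechf_finite[OF eps fin(1)] nn_integral_mechf_finite[OF eps fin(2)] E_fin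
      in \<open>simp_all add: h_int ennreal_mult_less_top e_def\<close>)
  moreover have "e\<^sup>2 = exp eps"
    by (simp add: e_def power2_eq_square exp_add[symmetric])
  ultimately show ?thesis
    unfolding h_int enn2real_mult by (simp add: e_def c_def E_def algebra_simps)
qed

lemma mechf_bounds_depth_close_Suc:
  assumes "0 \<le> eps" "depth_close (Suc k) D z" "Vol (int t - int k - 1) D < \<infinity>"
  shows "Vol (int t) z \<le> Vol (int t - int k - 1) D"
    and "exp (eps * real (t + g) / 2) * enn2real (Vol (int t + int k + int g + 1) D)
      \<le> enn2real (\<integral>\<^sup>+y. mechf eps t z y \<partial>lebesgue)"
proof -
  show Vt: "Vol (int t) z \<le> Vol (int t - int k - 1) D"
    using Vol_depth_close[OF depth_close_sym[OF assms(2)], of "int t"] by (simp add: algebra_simps)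
  have "ennreal (exp (eps * real (t + g) / 2)) * Vol (int t + int k + int g + 1) D
      \<le> (\<integral>\<^sup>+y. mechf eps t z y \<partial>lebesgue)"
    using nn_integral_mechf_ge[OF assms(2,1), of t g] by (simp add: algebra_simps)
  moreover have "(\<integral>\<^sup>+y. mechf eps t z y \<partial>lebesgue) < top"
    using nn_integral_mechf_finite[OF assms(1) le_less_trans[OF Vt assms(3)]] by simp
  ultimately show "exp (eps * real (t + g) / 2) * enn2real (Vol (int t + int k + int g + 1) D)
      \<le> enn2real (\<integral>\<^sup>+y. mechf eps t z y \<partial>lebesgue)"
    by (auto simp: enn2real_mult dest: enn2real_mono)
qed

lemma mechA_measure_le:
  assumes eps: "0 \<le> eps" and "Mcond eps delta t D k"
    and z1: "depth_close (Suc k) D z1" and z2: "depth_close (Suc k) D z2"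
    and z12: "depth_close 1 z1 z2" and W: "W \<in> sets lebesgue"
  shows "measure (mechA eps t z1) W \<le> exp eps * measure (mechA eps t z2) W + (exp (eps / 2) + 1) * delta"
proof -
  from assms(2) obtain g :: nat where fin: "Vol (int t - int k - 1) D < \<infinity>"
    and pos: "0 < Vol (int t + int k + int g + 1) D"
    and ratio: "enn2real (Vol (int t - int k - 1) D) / enn2real (Vol (int t + int k + int g + 1) D)
        * exp (- eps * real g / 2) \<le> delta"
    unfolding Mcond_def by blast
  define e c G where "e = exp (eps / 2)" and "c = exp (eps * real t / 2)" and "G = exp (eps * real g / 2)"
  define a b where "a = enn2real (Vol (int t - int k - 1) D)"
    and "b = enn2real (Vol (int t + int k + int g + 1) D)"
  define Z1 where "Z1 = enn2real (\<integral>\<^sup>+y. mechf eps t z1 y \<partial>lebesgue)"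
  have "0 < b"
    using pos fin Vol_mono[of "int t - int k - 1" "int t + int k + int g + 1" D]
    by (auto simp: b_def enn2real_positive_iff top.not_eq_extremum)
  then have cGb: "0 < c * G * b"
    by (simp add: c_def G_def)
  have "exp (eps * real (t + g) / 2) = c * G"
    unfolding c_def G_def by (simp add: exp_add[symmetric] add_divide_distrib distrib_left)
  note Z_ge = mechf_bounds_depth_close_Suc(2)[OF eps _ fin, where g = g, folded b_def, unfolded this]
  note Vt = mechf_bounds_depth_close_Suc(1)[OF eps _ fin]
  have Z_pos: "0 < (\<integral>\<^sup>+y. mechf eps t z y \<partial>lebesgue)" if "depth_close (Suc k) D z" for z
    using Z_ge[OF that] cGb enn2real_positive_iff[of "\<integral>\<^sup>+y. mechf eps t z y \<partial>lebesgue"] by linarith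
  have E_le: "enn2real (emeasure lebesgue {y. t \<le> tukey z y \<and> tukey z' y < t}) \<le> a"
    if "depth_close (Suc k) D z" for z z'
    using order_trans[OF emeasure_depth_boundary_le Vt[OF that]] fin unfolding a_def
    by (intro enn2real_mono) auto
  have "0 \<le> a" "0 < e" "0 < c"
    by (simp_all add: a_def e_def c_def)
  have "measure (mechA eps t z1) W \<le> exp eps * measure (mechA eps t z2) W
      + c * (e * enn2real (emeasure lebesgue {y. t \<le> tukey z2 y \<and> tukey z1 y < t})
        + enn2real (emeasure lebesgue {y. t \<le> tukey z1 y \<and> tukey z2 y < t})) / Z1"
    unfolding c_def e_def Z1_def
    using z12 W le_less_trans[OF Vt[OF z1] fin] le_less_trans[OF Vt[OF z2] fin] Z_pos[OF z1] Z_pos[OF z2]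
    by (rule mechA_measure_le_boundary[OF eps])
  also have "\<dots> \<le> exp eps * measure (mechA eps t z2) W + (e + 1) * (c * a) / Z1"
    using E_le[OF z2] E_le[OF z1] Z_ge[OF z1] cGb \<open>0 < e\<close> \<open>0 < c\<close>
    by (intro add_left_mono divide_right_mono) (auto simp: Z1_def algebra_simps intro!: mult_left_mono add_mono)
  also have "\<dots> \<le> exp eps * measure (mechA eps t z2) W + (e + 1) * (c * a) / (c * G * b)"
    using Z_ge[OF z1] cGb \<open>0 \<le> a\<close> \<open>0 < e\<close> \<open>0 < c\<close>
    by (intro add_left_mono divide_left_mono) (auto simp: Z1_def)
  also have "\<dots> = exp eps * measure (mechA eps t z2) W + (e + 1) * (a / b * exp (- eps * real g / 2))"
    using \<open>0 < c\<close> \<open>0 < b\<close> by (simp add: G_def exp_minus field_simps)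
  also have "\<dots> \<le> exp eps * measure (mechA eps t z2) W + (exp (eps / 2) + 1) * delta"
    unfolding a_def b_def e_def using ratio by (intro add_left_mono mult_left_mono) auto
  finally show ?thesis .
qed

lemma safe_if_dH_le_Mfun:
  assumes eps: "0 \<le> eps" and "0 \<le> delta" and "int (dH D z) \<le> Mfun eps delta t D"
  shows "safe eps (4 * exp eps * delta) t z"
proof -
  define k where "k = nat (Mfun eps delta t D)"
  have "0 \<le> Mfun eps delta t D"
    using assms(3) by linarith
  then have Mc: "Mcond eps delta t D k"
    unfolding k_def by (rule Mcond_Mfun)
  have "dH D z \<le> k"
    using assms(3) \<open>0 \<le> Mfun eps delta t D\<close> by (simp add: k_def le_nat_iff)
  then have z: "depth_close (Suc k) D z"
    by (intro depth_close_mono[OF depth_close_dH]) simp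
  have z': "depth_close (Suc k) D z'" if "nbr z z'" for z'
    using depth_close_trans[OF depth_close_dH[of D z] nbr_depth_close[OF that]]
    by (rule depth_close_mono) (use \<open>dH D z \<le> k\<close> in simp)
  have "exp (eps / 2) \<le> exp eps" "1 \<le> exp eps"
    using eps by simp_all
  then have "exp (eps / 2) + 1 \<le> 4 * exp eps"
    by linarith
  then have slack: "(exp (eps / 2) + 1) * delta \<le> 4 * exp eps * delta"
    using assms(2) by (rule mult_right_mono)
  show ?thesis
    unfolding safe_def indist_def
  proof (intro allI impI conjI ballI)
    fix z' W
    assume "nbr z z'" and "W \<in> sets (mechA eps t z)"
    then have W: "W \<in> sets lebesgue"
      by (simp add: mechA_def)
    show "measure (mechA eps t z) W \<le> exp eps * measure (mechA eps t z') W + 4 * exp eps * delta"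
      using mechA_measure_le[OF eps Mc z z'[OF \<open>nbr z z'\<close>] nbr_depth_close[OF \<open>nbr z z'\<close>] W] slack
      by linarith
    show "measure (mechA eps t z') W \<le> exp eps * measure (mechA eps t z) W + 4 * exp eps * delta"
      using mechA_measure_le[OF eps Mc z'[OF \<open>nbr z z'\<close>] z
          depth_close_sym[OF nbr_depth_close[OF \<open>nbr z z'\<close>]] W] slack
      by linarith
  qed (simp add: mechA_def)
qed

theorem mainTheorem2:
  fixes eps delta :: real and t :: nat
  assumes "eps > 0" and "delta > 0" and "t > 0"
  shows "(\<forall>D D' :: 'n::finite db. nbr D D' \<longrightarrow>
            \<bar>Mfun eps delta t D - Mfun eps delta t D'\<bar> \<le> 1)
       \<and> (\<forall>D z :: 'n::finite db.
            Vol (int t) z > 0 \<longrightarrow> (\<forall>z'. nbr z z' \<longrightarrow> Vol (int t) z' > 0) \<longrightarrow>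
            z \<in> Unsafe eps (4 * exp eps * delta) t \<longrightarrow>
            int (dH D z) > Mfun eps delta t D)"
proof (intro conjI allI impI)
  fix D D' :: "'n db"
  assume "nbr D D'"
  then show "\<bar>Mfun eps delta t D - Mfun eps delta t D'\<bar> \<le> 1"
    by (rule Mfun_nbr)
next
  fix D z :: "'n db"
  assume "z \<in> Unsafe eps (4 * exp eps * delta) t"
  then show "int (dH D z) > Mfun eps delta t D"
    using safe_if_dH_le_Mfun[of eps delta D z t] assms by (force simp: Unsafe_def)
qed

end
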